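(* Let $\mathcal{H}^S$ and $\mathcal{H}^A$ be $d$-dimensional Hilbert spaces with fixed orthonormal bases $\{|i\rangle\}_{i=0}^{d-1}$, let $|0\rangle^A$ be the first basis vector of $\mathcal{H}^A$, and equip $\mathcal{H}^S\otimes\mathcal{H}^A$ with the product basis. For every state $\rho^S$ on $\mathcal{H}^S$ and every incoherent operation $\Lambda^{SA}$ on $\mathcal{H}^S\otimes\mathcal{H}^A$, \[ \mathcal{L}_C(\rho^S)\ge\mathcal{L}_E\big(\Lambda^{SA}(\rho^S\otimes|0\rangle^A\langle 0|)\big). \]
   Context: A state is incoherent if it is diagonal in the fixed basis. An incoherent operation is a completely positive trace-preserving map $\Lambda(\rho)=\sum_nK_n\rho K_n^\dagger$ with $\sum_nK_n^\dagger K_n=I$ where each $K_n$ maps diagonal (incoherent) operators to diagonal operators under $\delta\mapsto K_n\delta K_n^\dagger$; for $\mathcal{H}^S\otimes\mathcal{H}^A$ the fixed basis is $\{|i\rangle\otimes|j\rangle\}$. The coherence rank $R_C(|\psi\rangle)$ of a pure state is the number of nonzero coefficients in the fixed basis; $\mathcal{L}_C(|\psi\rangle)=\log_2R_C(|\psi\rangle)$; for a state $\rho$, $\mathcal{L}_C(\rho)=\min\sum_ip_i\mathcal{L}_C(|\psi_i\rangle)$ over all pure-state decompositions $\rho=\sum_ip_i|\psi_i\rangle\langle\psi_i|$. For a bipartite pure state $|\psi^{SA}\rangle$ with Schmidt rank $r$, $\mathcal{L}_E(|\psi^{SA}\rangle)=\log_2 r$, and for a bipartite state $\rho^{SA}$,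 $\mathcal{L}_E(\rho^{SA})=\min\sum_ip_i\mathcal{L}_E(|\psi_i^{SA}\rangle)$ over all pure-state decompositions $\rho^{SA}=\sum_ip_i|\psi_i^{SA}\rangle\langle\psi_i^{SA}|$. *)

theory Defs
  imports Complex_Main "Jordan_Normal_Form.Matrix"
begin

text \<open>Finite-dimensional quantum states as complex matrices.
  The system and ancilla have dimension d; the product basis vector
  |i> (x) |j> of the joint space (dimension d*d) has index i*d + j.\<close>

definition adj :: "complex mat \<Rightarrow> complex mat" where
  "adj A = mat (dim_col A) (dim_row A) (\<lambda>(i,j). cnj (A $$ (j,i)))"

definition density :: "nat \<Rightarrow> complex mat \<Rightarrow> bool" where
  "density n \<rho> \<longleftrightarrow> \<rho> \<in> carrier_mat n n \<and> adj \<rho> = \<rho> \<and>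
     (\<forall>v \<in> carrier_vec n. 0 \<le> Re (\<Sum>i<n. \<Sum>j<n. cnj (v $ i) * \<rho> $$ (i,j) * v $ j)) \<and>
     (\<Sum>i<n. \<rho> $$ (i,i)) = 1"

definition unit_vec :: "nat \<Rightarrow> complex vec \<Rightarrow> bool" where
  "unit_vec n v \<longleftrightarrow> v \<in> carrier_vec n \<and> (\<Sum>i<n. (cmod (v $ i))\<^sup>2) = 1"

definition pure_decomp :: "nat \<Rightarrow> complex mat \<Rightarrow> nat \<Rightarrow> (nat \<Rightarrow> real) \<Rightarrow> (nat \<Rightarrow> complex vec) \<Rightarrow> bool" where
  "pure_decomp n \<rho> m p \<psi> \<longleftrightarrow> \<rho> \<in> carrier_mat n n \<and>
     (\<forall>k<m. 0 \<le> p k) \<and> (\<Sum>k<m. p k) = 1 \<and> (\<forall>k<m. unit_vec n (\<psi> k)) \<and>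
     (\<forall>i<n. \<forall>j<n. \<rho> $$ (i,j) = (\<Sum>k<m. complex_of_real (p k) * \<psi> k $ i * cnj (\<psi> k $ j)))"

definition coh_rank :: "nat \<Rightarrow> complex vec \<Rightarrow> nat" where
  "coh_rank n v = card {i. i < n \<and> v $ i \<noteq> 0}"

definition L_C :: "nat \<Rightarrow> complex mat \<Rightarrow> real" where
  "L_C n \<rho> = Inf {(\<Sum>k<m. p k * log 2 (real (coh_rank n (\<psi> k)))) | m p \<psi>. pure_decomp n \<rho> m p \<psi>}"

definition orthonormal_fam :: "nat \<Rightarrow> nat \<Rightarrow> (nat \<Rightarrow> complex vec) \<Rightarrow> bool" where
  "orthonormal_fam d r a \<longleftrightarrow> (\<forall>k<r. a k \<in> carrier_vec d) \<and>
     (\<forall>k<r. \<forall>l<r. (\<Sum>i<d. cnj (a k $ i) * a l $ i) = (if k = l then 1 else 0))"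

definition schmidt_decomp :: "nat \<Rightarrow> complex vec \<Rightarrow> nat \<Rightarrow> (nat \<Rightarrow> real) \<Rightarrow> (nat \<Rightarrow> complex vec) \<Rightarrow> (nat \<Rightarrow> complex vec) \<Rightarrow> bool" where
  "schmidt_decomp d v r lam a b \<longleftrightarrow> (\<forall>k<r. 0 < lam k) \<and> orthonormal_fam d r a \<and> orthonormal_fam d r b \<and>
     (\<forall>i<d. \<forall>j<d. v $ (i * d + j) = (\<Sum>k<r. complex_of_real (lam k) * a k $ i * b k $ j))"

definition schmidt_rank :: "nat \<Rightarrow> complex vec \<Rightarrow> nat" where
  "schmidt_rank d v = (LEAST r. \<exists>lam a b. schmidt_decomp d v r lam a b)"

definition L_E :: "nat \<Rightarrow> complex mat \<Rightarrow> real" where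
  "L_E d \<rho> = Inf {(\<Sum>k<m. p k * log 2 (real (schmidt_rank d (\<psi> k)))) | m p \<psi>. pure_decomp (d * d) \<rho> m p \<psi>}"

definition incoherent_op :: "nat \<Rightarrow> nat \<Rightarrow> (nat \<Rightarrow> complex mat) \<Rightarrow> bool" where
  "incoherent_op n N K \<longleftrightarrow> (\<forall>l<N. K l \<in> carrier_mat n n) \<and>
     (\<forall>i<n. \<forall>j<n. (\<Sum>l<N. (adj (K l) * K l) $$ (i,j)) = (if i = j then 1 else 0)) \<and>
     (\<forall>l<N. \<forall>\<delta> \<in> carrier_mat n n. diagonal_mat \<delta> \<longrightarrow> diagonal_mat (K l * \<delta> * adj (K l)))"

definition apply_kraus :: "nat \<Rightarrow> nat \<Rightarrow> (nat \<Rightarrow> complex mat) \<Rightarrow> complex mat \<Rightarrow> complex mat" where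
  "apply_kraus n N K \<rho> = mat n n (\<lambda>(i,j). \<Sum>l<N. (K l * \<rho> * adj (K l)) $$ (i,j))"

definition tensor_ket0 :: "nat \<Rightarrow> complex mat \<Rightarrow> complex mat" where
  "tensor_ket0 d \<rho> = mat (d * d) (d * d)
     (\<lambda>(r,c). if r mod d = 0 \<and> c mod d = 0 then \<rho> $$ (r div d, c div d) else 0)"

end

(* Write rho = sum_k p_k |psi_k><psi_k|; such a decomposition exists by the spectral theorem for
   Hermitian matrices. With phi_k = psi_k (x) |0>, the state rho (x) |0><0| decomposes as
   sum_k p_k |phi_k><phi_k| with the same coherence ranks, and
   Lambda(rho (x) |0><0|) = sum_{k,l} p_k |K_l phi_k|^2 |u_kl><u_kl|, where u_kl is K_l phi_k
   normalised; by completeness of the Kraus operators the weights belonging to a fixed k add up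
   to p_k. An incoherent Kraus operator has at most one nonzero entry in each column, so
   R_C(K_l phi_k) <= R_C(phi_k). Finally, the Schmidt rank of a bipartite vector is at most the
   number of ancilla indices in its support (by a singular value decomposition of its coefficient
   matrix), hence at most its coherence rank. Altogether
   L_E(Lambda(rho (x) |0><0|)) <= L_C(Lambda(rho (x) |0><0|)) <= L_C(rho (x) |0><0|) <= L_C(rho). *)

theory Submission
  imports Defs "Jordan_Normal_Form.Spectral_Radius"
begin

lemma index_pair_less: "i < d \<Longrightarrow> j < d \<Longrightarrow> i * d + j < d * (d::nat)"
proof -
  assume "i < d" "j < d"
  then have "i * d + j < Suc i * d" by simp
  also have "\<dots> \<le> d * d" using \<open>i < d\<close> by (intro mult_le_mono1) simp
  finally show ?thesis .
qed

lemma sum_lessThan_mult_div_mod: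
  fixes F :: "nat \<Rightarrow> nat \<Rightarrow> 'a::comm_monoid_add"
  shows "(\<Sum>t<m * N. F (t div N) (t mod N)) = (\<Sum>k<m. \<Sum>l<N. F k l)"
proof (cases "N = 0")
  case False
  have "(\<Sum>t<m * N. F (t div N) (t mod N)) = (\<Sum>k<m. \<Sum>t\<in>{k * N..<k * N + N}. F (t div N) (t mod N))"
    by (rule sum.nat_group[symmetric])
  also have "\<dots> = (\<Sum>k<m. \<Sum>l<N. F k l)"
  proof (rule sum.cong[OF refl])
    fix k
    have "(\<Sum>t\<in>{k * N..<k * N + N}. F (t div N) (t mod N)) = (\<Sum>l<N. F ((l + k * N) div N) ((l + k * N) mod N))"
      using sum.shift_bounds_nat_ivl[of "\<lambda>t. F (t div N) (t mod N)" 0 "k * N" N]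
      by (simp add: add.commute atLeast0LessThan)
    also have "\<dots> = (\<Sum>l<N. F k l)"
      using False by (intro sum.cong) auto
    finally show "(\<Sum>t\<in>{k * N..<k * N + N}. F (t div N) (t mod N)) = (\<Sum>l<N. F k l)" .
  qed
  finally show ?thesis .
qed simp

lemma sum_if_mod_eq_0:
  fixes f :: "nat \<Rightarrow> 'a::comm_monoid_add"
  assumes "0 < d"
  shows "(\<Sum>a<d * d. if a mod d = 0 then f (a div d) else 0) = (\<Sum>i<d. f i)"
  using sum_lessThan_mult_div_mod[of "\<lambda>i l. if l = 0 then f i else 0" d d] assms by simp

lemma log2_of_nat_nonneg: "0 \<le> log 2 (real c)"
  by (cases "c = 0") (auto simp: log_def)

lemma log2_of_nat_mono: "a \<le> c \<Longrightarrow> log 2 (real a) \<le> log 2 (real c)"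
proof (cases "a = 0")
  case True
  then show ?thesis using log2_of_nat_nonneg[of c] by (simp add: log_def)
qed simp

lemma index_mult_mat_sum:
  assumes "A \<in> carrier_mat n m" "B \<in> carrier_mat m p" "i < n" "j < p"
  shows "(A * B) $$ (i,j) = (\<Sum>k<m. A $$ (i,k) * B $$ (k,j))"
  using assms by (auto simp: scalar_prod_def atLeast0LessThan intro!: sum.cong)

lemma index_mult_mat_vec_sum:
  "A \<in> carrier_mat m n \<Longrightarrow> v \<in> carrier_vec n \<Longrightarrow> i < m \<Longrightarrow> (A *\<^sub>v v) $ i = (\<Sum>a<n. A $$ (i,a) * v $ a)"
  by (auto simp: scalar_prod_def atLeast0LessThan intro!: sum.cong)

lemma adj_carrier_mat [simp]: "A \<in> carrier_mat n m \<Longrightarrow> adj A \<in> carrier_mat m n"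
  and adj_dim [simp]: "dim_row (adj A) = dim_col A" "dim_col (adj A) = dim_row A"
  and index_adj [simp]: "i < dim_col A \<Longrightarrow> j < dim_row A \<Longrightarrow> adj A $$ (i,j) = cnj (A $$ (j,i))"
  unfolding adj_def by auto

lemma adj_adj [simp]: "adj (adj A) = A"
  by (rule eq_matI) auto

lemma adj_mult:
  assumes "A \<in> carrier_mat n m" "B \<in> carrier_mat m p"
  shows "adj (A * B) = adj B * adj A"
proof (rule eq_matI)
  fix i j assume "i < dim_row (adj B * adj A)" "j < dim_col (adj B * adj A)"
  then have i: "i < p" and j: "j < n" using assms by auto
  have "adj (A * B) $$ (i,j) = (\<Sum>k<m. cnj (A $$ (j,k)) * cnj (B $$ (k,i)))"
    using assms i j by (simp add: index_mult_mat_sum[OF assms j i] cnj_sum)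
  also have "\<dots> = (adj B * adj A) $$ (i,j)"
    using assms i j by (auto simp del: index_mult_mat simp: index_mult_mat_sum[of "adj B" p m "adj A" n]
        intro!: sum.cong)
  finally show "adj (A * B) $$ (i,j) = (adj B * adj A) $$ (i,j)" .
qed (use assms in auto)

lemma adj_zero_mat [simp]: "adj (0\<^sub>m n m) = 0\<^sub>m m n"
  and adj_one_mat [simp]: "adj (1\<^sub>m n) = 1\<^sub>m n"
  by (rule eq_matI; auto)+

lemma adj_four_block_mat:
  assumes "A \<in> carrier_mat n1 m1" "B \<in> carrier_mat n1 m2" "C \<in> carrier_mat n2 m1" "D \<in> carrier_mat n2 m2"
  shows "adj (four_block_mat A B C D) = four_block_mat (adj A) (adj C) (adj B) (adj D)"
  by (rule eq_matI) (use assms in auto)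

lemma index_mult_mult_adj:
  assumes "A \<in> carrier_mat r n" "B \<in> carrier_mat n m" "C \<in> carrier_mat c m" "i < r" "j < c"
  shows "(A * B * adj C) $$ (i,j) = (\<Sum>a<n. \<Sum>b<m. A $$ (i,a) * B $$ (a,b) * cnj (C $$ (j,b)))"
proof -
  have "(A * B * adj C) $$ (i,j) = (\<Sum>b<m. (A * B) $$ (i,b) * adj C $$ (b,j))"
    using assms by (intro index_mult_mat_sum) auto
  also have "\<dots> = (\<Sum>b<m. (\<Sum>a<n. A $$ (i,a) * B $$ (a,b)) * cnj (C $$ (j,b)))"
    using assms by (auto simp del: index_mult_mat simp: index_mult_mat_sum[of A r n B m] intro!: sum.cong)
  finally show ?thesis
    by (simp add: sum_distrib_right sum.swap[of _ "{..<m}"])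
qed

definition unitary :: "nat \<Rightarrow> complex mat \<Rightarrow> bool" where
  "unitary n U \<longleftrightarrow> U \<in> carrier_mat n n \<and> adj U * U = 1\<^sub>m n"

lemma unitary_mult_adj: "unitary n U \<Longrightarrow> U * adj U = 1\<^sub>m n"
  unfolding unitary_def using mat_mult_left_right_inverse adj_carrier_mat by blast

lemma unitary_mult:
  assumes U: "unitary n U" and V: "unitary n V"
  shows "unitary n (U * V)"
proof -
  have carr: "U \<in> carrier_mat n n" "V \<in> carrier_mat n n" using U V unfolding unitary_def by auto
  have "adj (U * V) * (U * V) = adj V * (adj U * U) * V"
    using carr by (simp add: adj_mult[of _ n n] assoc_mult_mat[of _ n n _ n _ n] mult_carrier_mat[of _ n n])
  also have "\<dots> = 1\<^sub>m n" using U V carr unfolding unitary_def by simp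
  finally show ?thesis using carr unfolding unitary_def by auto
qed

lemma unitary_iff_orthonormal_cols:
  assumes "U \<in> carrier_mat n n"
  shows "unitary n U \<longleftrightarrow> orthonormal_fam n n (col U)"
proof -
  have "(adj U * U) $$ (k,l) = (\<Sum>i<n. cnj (col U k $ i) * col U l $ i)" if "k < n" "l < n" for k l
    using assms that by (auto simp del: index_mult_mat simp: index_mult_mat_sum[of "adj U" n n U n]
        intro!: sum.cong)
  then have "adj U * U = 1\<^sub>m n \<longleftrightarrow>
      (\<forall>k<n. \<forall>l<n. (\<Sum>i<n. cnj (col U k $ i) * col U l $ i) = (if k = l then 1 else 0))"
    using assms by (auto simp: mat_eq_iff)
  then show ?thesis
    using assms unfolding unitary_def orthonormal_fam_def by auto
qed

lemma orthonormal_fam_unit_vec: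
  assumes "orthonormal_fam n r u" "k < r"
  shows "unit_vec n (u k)"
proof -
  have "complex_of_real (\<Sum>i<n. (cmod (u k $ i))\<^sup>2) = (\<Sum>i<n. cnj (u k $ i) * u k $ i)"
    by (simp add: of_real_sum mult.commute flip: complex_norm_square)
  also have "\<dots> = 1"
    using assms unfolding orthonormal_fam_def by simp
  finally show ?thesis
    using assms unfolding unit_vec_def orthonormal_fam_def by (simp only: of_real_eq_1_iff)
qed

definition diag_real :: "nat \<Rightarrow> (nat \<Rightarrow> real) \<Rightarrow> complex mat" where
  "diag_real n \<mu> = mat n n (\<lambda>(i,j). if i = j then complex_of_real (\<mu> i) else 0)"

lemma diag_real_carrier [simp]: "diag_real n \<mu> \<in> carrier_mat n n"
  unfolding diag_real_def by auto

lemma diag_real_Suc: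
  "diag_real (Suc n) \<mu> = four_block_mat (diag_real 1 \<mu>) (0\<^sub>m 1 n) (0\<^sub>m n 1) (diag_real n (\<lambda>k. \<mu> (Suc k)))"
  by (rule eq_matI) (auto simp: diag_real_def)

lemma index_mult_diag_real_adj:
  assumes "U \<in> carrier_mat r n" "V \<in> carrier_mat c n" "i < r" "j < c"
  shows "(U * diag_real n \<mu> * adj V) $$ (i,j) = (\<Sum>k<n. U $$ (i,k) * complex_of_real (\<mu> k) * cnj (V $$ (j,k)))"
proof -
  have "(\<Sum>b<n. U $$ (i,a) * diag_real n \<mu> $$ (a,b) * cnj (V $$ (j,b)))
      = U $$ (i,a) * complex_of_real (\<mu> a) * cnj (V $$ (j,a))" if "a < n" for a
    using that by (simp add: diag_real_def if_distrib if_distribR sum.delta cong: if_cong)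
  then show ?thesis
    unfolding index_mult_mult_adj[OF assms(1) diag_real_carrier assms(2-4)] by simp
qed

lemma unitary_conj_diag:
  assumes U: "unitary n U" and D: "D \<in> carrier_mat n n" and A: "A = U * D * adj U"
  shows "adj U * A * U = D"
proof -
  have Uc: "U \<in> carrier_mat n n" using U unfolding unitary_def by auto
  have "adj U * A * U = (adj U * U) * D * (adj U * U)"
    unfolding A using Uc D
    by (simp add: assoc_mult_mat[of _ n n _ n _ n] mult_carrier_mat[of _ n n])
  then show ?thesis
    using U D unfolding unitary_def by simp
qed

lemma unitary_four_block:
  assumes "unitary n U"
  shows "unitary (m + n) (four_block_mat (1\<^sub>m m) (0\<^sub>m m n) (0\<^sub>m n m) U)"
proof -
  have U: "U \<in> carrier_mat n n" "adj U * U = 1\<^sub>m n" using assms unfolding unitary_def by auto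
  have "adj (four_block_mat (1\<^sub>m m) (0\<^sub>m m n) (0\<^sub>m n m) U)
      = four_block_mat (1\<^sub>m m) (0\<^sub>m m n) (0\<^sub>m n m) (adj U)"
    using U by (simp add: adj_four_block_mat[of _ m m _ n _ n])
  moreover have "four_block_mat (1\<^sub>m m) (0\<^sub>m m n) (0\<^sub>m n m) (adj U) * four_block_mat (1\<^sub>m m) (0\<^sub>m m n) (0\<^sub>m n m) U
      = four_block_mat (1\<^sub>m m) (0\<^sub>m m n) (0\<^sub>m n m) (1\<^sub>m n)"
    using U by (simp add: mult_four_block_mat[of _ m m _ n _ n _ _ m _ n] left_mult_zero_mat right_mult_zero_mat)
  ultimately show ?thesis
    using U unfolding unitary_def by simp
qed

lemma four_block_unitary_conj:
  assumes "A \<in> carrier_mat m m" "U \<in> carrier_mat n n" "D \<in> carrier_mat n n"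
  shows "four_block_mat (1\<^sub>m m) (0\<^sub>m m n) (0\<^sub>m n m) U * four_block_mat A (0\<^sub>m m n) (0\<^sub>m n m) D
      * adj (four_block_mat (1\<^sub>m m) (0\<^sub>m m n) (0\<^sub>m n m) U)
    = four_block_mat A (0\<^sub>m m n) (0\<^sub>m n m) (U * D * adj U)"
proof -
  have adj_eq: "adj (four_block_mat (1\<^sub>m m) (0\<^sub>m m n) (0\<^sub>m n m) U)
      = four_block_mat (1\<^sub>m m) (0\<^sub>m m n) (0\<^sub>m n m) (adj U)"
    using assms by (simp add: adj_four_block_mat[of _ m m _ n _ n])
  have left: "four_block_mat (1\<^sub>m m) (0\<^sub>m m n) (0\<^sub>m n m) U * four_block_mat A (0\<^sub>m m n) (0\<^sub>m n m) D
      = four_block_mat A (0\<^sub>m m n) (0\<^sub>m n m) (U * D)"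
    using assms
    by (simp add: mult_four_block_mat[of _ m m _ n _ n _ _ m _ n] left_mult_zero_mat right_mult_zero_mat)
  have "U * D * adj U \<in> carrier_mat n n"
    using assms by auto
  then have "four_block_mat A (0\<^sub>m m n) (0\<^sub>m n m) (U * D)
      * four_block_mat (1\<^sub>m m) (0\<^sub>m m n) (0\<^sub>m n m) (adj U)
    = four_block_mat A (0\<^sub>m m n) (0\<^sub>m n m) (U * D * adj U)"
    using assms
    by (simp add: mult_four_block_mat[of _ m m _ n _ n _ _ m _ n] left_mult_zero_mat right_mult_zero_mat)
  then show ?thesis
    unfolding adj_eq left .
qed

definition vec_norm_sq :: "complex vec \<Rightarrow> real" where
  "vec_norm_sq v = (\<Sum>i<dim_vec v. (cmod (v $ i))\<^sup>2)"

lemma of_real_vec_norm_sq: "complex_of_real (vec_norm_sq v) = v \<bullet>c v"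
proof -
  have "complex_of_real (vec_norm_sq v) = (\<Sum>i<dim_vec v. v $ i * cnj (v $ i))"
    by (simp only: vec_norm_sq_def of_real_sum complex_norm_square)
  then show ?thesis
    by (simp add: scalar_prod_def atLeast0LessThan)
qed

lemma vec_norm_sq_nonneg: "0 \<le> vec_norm_sq v"
  unfolding vec_norm_sq_def by (simp add: sum_nonneg)

lemma vec_norm_sq_eq_0_iff: "vec_norm_sq v = 0 \<longleftrightarrow> v = 0\<^sub>v (dim_vec v)"
  unfolding vec_norm_sq_def by (auto simp: sum_nonneg_eq_0_iff vec_eq_iff)

lemma vec_norm_sq_smult: "vec_norm_sq (c \<cdot>\<^sub>v v) = (cmod c)\<^sup>2 * vec_norm_sq v"
  by (simp add: vec_norm_sq_def norm_mult power_mult_distrib sum_distrib_left)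

lemma unit_vec_iff_norm_sq: "unit_vec n v \<longleftrightarrow> v \<in> carrier_vec n \<and> vec_norm_sq v = 1"
  unfolding unit_vec_def vec_norm_sq_def by auto

lemma sum_cnj_mult_eq_cscalar_prod:
  "u \<in> carrier_vec n \<Longrightarrow> w \<in> carrier_vec n \<Longrightarrow> (\<Sum>i<n. cnj (u $ i) * w $ i) = w \<bullet>c u"
  by (simp add: scalar_prod_def atLeast0LessThan mult.commute)

(* The zero vector is sent to the first basis vector, so that the result is always a unit vector;
   in the decompositions below it only occurs with weight zero. *)
definition normalize_vec :: "nat \<Rightarrow> complex vec \<Rightarrow> complex vec" where
  "normalize_vec n v = (if vec_norm_sq v = 0 then vec n (\<lambda>i. if i = 0 then 1 else 0)
     else complex_of_real (1 / sqrt (vec_norm_sq v)) \<cdot>\<^sub>v v)"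

lemma normalize_vec_carrier [simp]: "v \<in> carrier_vec n \<Longrightarrow> normalize_vec n v \<in> carrier_vec n"
  unfolding normalize_vec_def by auto

lemma unit_vec_normalize_vec:
  assumes "0 < n" "v \<in> carrier_vec n"
  shows "unit_vec n (normalize_vec n v)"
proof (cases "vec_norm_sq v = 0")
  case True
  have "(\<Sum>i<n. (cmod (if i = 0 then 1 else 0 :: complex))\<^sup>2) = (\<Sum>i<n. if i = 0 then 1 else 0)"
    by (rule sum.cong) auto
  also have "\<dots> = 1"
    using assms by simp
  finally show ?thesis
    using True unfolding unit_vec_def normalize_vec_def by simp
next
  case False
  then have "0 < vec_norm_sq v" using vec_norm_sq_nonneg[of v] by simp
  then show ?thesis
    using False assms
    by (simp add: unit_vec_iff_norm_sq normalize_vec_def vec_norm_sq_smult norm_divide power_divide)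
qed

lemma norm_sq_mult_normalize_vec:
  assumes "v \<in> carrier_vec n" "i < n" "j < n"
  shows "complex_of_real (vec_norm_sq v) * normalize_vec n v $ i * cnj (normalize_vec n v $ j)
    = v $ i * cnj (v $ j)"
proof (cases "vec_norm_sq v = 0")
  case True
  then show ?thesis using assms by (simp add: vec_norm_sq_eq_0_iff)
next
  case False
  then have "0 < vec_norm_sq v" using vec_norm_sq_nonneg[of v] by simp
  then have "complex_of_real (vec_norm_sq v) * (1 / complex_of_real (sqrt (vec_norm_sq v)))\<^sup>2 = 1"
    by (simp add: power_divide flip: of_real_power)
  then show ?thesis
    using assms False by (simp add: normalize_vec_def power2_eq_square algebra_simps)
qed

lemma coh_rank_normalize_vec:
  assumes "v \<in> carrier_vec n" "vec_norm_sq v \<noteq> 0"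
  shows "coh_rank n (normalize_vec n v) = coh_rank n v"
proof -
  have "{i. i < n \<and> normalize_vec n v $ i \<noteq> 0} = {i. i < n \<and> v $ i \<noteq> 0}"
    using assms by (auto simp: normalize_vec_def)
  then show ?thesis
    unfolding coh_rank_def by simp
qed

lemma cscalar_prod_normalize_vec:
  assumes "u \<in> carrier_vec n" "w \<in> carrier_vec n" "vec_norm_sq u \<noteq> 0" "vec_norm_sq w \<noteq> 0"
  shows "normalize_vec n u \<bullet>c normalize_vec n w
    = (u \<bullet>c w) / complex_of_real (sqrt (vec_norm_sq u) * sqrt (vec_norm_sq w))"
  using assms by (simp add: normalize_vec_def conjugate_smult_vec smult_scalar_prod_distrib
      scalar_prod_smult_distrib)

section \<open>The spectral theorem for Hermitian matrices\<close>

lemma unitary_of_corthogonal: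
  assumes ws: "corthogonal ws" "set ws \<subseteq> carrier_vec n" "length ws = n"
  shows "unitary n (mat_of_cols n (map (normalize_vec n) ws))"
proof -
  define U where "U = mat_of_cols n (map (normalize_vec n) ws)"
  have wsc: "ws ! k \<in> carrier_vec n" if "k < n" for k
    using ws that by auto
  have ws_nz: "vec_norm_sq (ws ! k) \<noteq> 0" if "k < n" for k
    using corthogonalD[OF ws(1), of k k] that ws(3) by (auto simp flip: of_real_vec_norm_sq)
  have colU: "col U k = normalize_vec n (ws ! k)" if "k < n" for k
    unfolding U_def using ws that wsc by (subst col_mat_of_cols) auto
  have "orthonormal_fam n n (col U)"
    unfolding orthonormal_fam_def
  proof (intro conjI allI impI)
    fix k l assume k: "k < n" and l: "l < n"
    have "(\<Sum>i<n. cnj (col U k $ i) * col U l $ i) = normalize_vec n (ws ! l) \<bullet>c normalize_vec n (ws ! k)"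
      using wsc k l by (simp add: colU sum_cnj_mult_eq_cscalar_prod)
    also have "\<dots> = (ws ! l \<bullet>c ws ! k) / complex_of_real (sqrt (vec_norm_sq (ws ! l)) * sqrt (vec_norm_sq (ws ! k)))"
      using wsc ws_nz k l by (intro cscalar_prod_normalize_vec) auto
    also have "\<dots> = (if k = l then 1 else 0)"
    proof (cases "k = l")
      case True
      have "sqrt (vec_norm_sq (ws ! k)) * sqrt (vec_norm_sq (ws ! k)) = vec_norm_sq (ws ! k)"
        using vec_norm_sq_nonneg by simp
      then show ?thesis
        using True ws_nz[OF k] by (simp flip: of_real_vec_norm_sq)
    next
      case False
      then show ?thesis
        using corthogonalD[OF ws(1), of l k] k l ws(3) by simp
    qed
    finally show "(\<Sum>i<n. cnj (col U k $ i) * col U l $ i) = (if k = l then 1 else 0)" .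
  qed (use colU wsc in auto)
  moreover have "U \<in> carrier_mat n n"
    unfolding U_def using ws(3) by auto
  ultimately show ?thesis
    using unitary_iff_orthonormal_cols unfolding U_def by blast
qed

lemma unitary_with_first_col:
  assumes v: "v \<in> carrier_vec n" "v \<noteq> 0\<^sub>v n"
  shows "\<exists>U c. unitary n U \<and> col U 0 = c \<cdot>\<^sub>v v"
proof -
  interpret cof_vec_space n "TYPE(complex)" .
  note bc = basis_completion[OF v]
  define ws where "ws = gram_schmidt n (basis_completion v)"
  have ws: "corthogonal ws" "set ws \<subseteq> carrier_vec n" "length ws = n"
    using gram_schmidt_result[OF bc(2) bc(4) bc(5) ws_def] bc(6) by auto
  have "0 < n" using v by (cases n) auto
  then obtain vs where "basis_completion v = v # vs"
    using bc(6,7) by (cases "basis_completion v") auto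
  then have "hd ws = v"
    unfolding ws_def using v(1) by simp
  moreover have "ws \<noteq> []"
    using ws(3) \<open>0 < n\<close> by auto
  ultimately have "ws ! 0 = v"
    by (simp add: hd_conv_nth)
  define U where "U = mat_of_cols n (map (normalize_vec n) ws)"
  have "col U 0 = normalize_vec n v"
    unfolding U_def using ws \<open>0 < n\<close> v(1) \<open>ws ! 0 = v\<close> by (subst col_mat_of_cols) auto
  also have "\<dots> = complex_of_real (1 / sqrt (vec_norm_sq v)) \<cdot>\<^sub>v v"
    using v by (simp add: normalize_vec_def vec_norm_sq_eq_0_iff)
  finally have "col U 0 = complex_of_real (1 / sqrt (vec_norm_sq v)) \<cdot>\<^sub>v v" .
  moreover have "unitary n U"
    unfolding U_def by (rule unitary_of_corthogonal[OF ws])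
  ultimately show ?thesis
    by blast
qed

lemma unitary_conj_eigenvector_col:
  assumes A: "A \<in> carrier_mat n n" and W: "unitary n W" and "0 < n"
    and W0: "col W 0 = c \<cdot>\<^sub>v v" and v: "v \<in> carrier_vec n" "A *\<^sub>v v = \<kappa> \<cdot>\<^sub>v v"
  shows "col (adj W * A * W) 0 = \<kappa> \<cdot>\<^sub>v col (1\<^sub>m n) 0"
proof -
  have Wc: "W \<in> carrier_mat n n" using W unfolding unitary_def by auto
  have "col (A * W) 0 = A *\<^sub>v col W 0"
    using A Wc \<open>0 < n\<close> by (intro col_mult2) auto
  also have "\<dots> = c \<cdot>\<^sub>v (A *\<^sub>v v)"
    unfolding W0 using A v(1) by (rule mult_mat_vec)
  also have "\<dots> = \<kappa> \<cdot>\<^sub>v col W 0"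
    unfolding v(2) W0 by (simp only: smult_smult_assoc mult.commute)
  finally have AW0: "col (A * W) 0 = \<kappa> \<cdot>\<^sub>v col W 0" .
  have "adj W * A * W = adj W * (A * W)"
    using A Wc by (intro assoc_mult_mat) auto
  then have "col (adj W * A * W) 0 = adj W *\<^sub>v col (A * W) 0"
    using A Wc \<open>0 < n\<close> by (simp only:) (rule col_mult2, auto)
  also have "\<dots> = \<kappa> \<cdot>\<^sub>v (adj W *\<^sub>v col W 0)"
    unfolding AW0 using Wc by (intro mult_mat_vec) auto
  also have "adj W *\<^sub>v col W 0 = col (adj W * W) 0"
    using Wc \<open>0 < n\<close> by (intro col_mult2[symmetric]) auto
  finally show ?thesis
    using W unfolding unitary_def by simp
qed

lemma hermitian_first_col_zero_block:
  assumes B: "B \<in> carrier_mat (Suc n) (Suc n)" and herm: "adj B = B"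
    and col0: "\<And>i. 0 < i \<Longrightarrow> i < Suc n \<Longrightarrow> B $$ (i,0) = 0"
  shows "B = four_block_mat (diag_real 1 (\<lambda>_. Re (B $$ (0,0)))) (0\<^sub>m 1 n) (0\<^sub>m n 1) (mat_delete B 0 0)"
    and "adj (mat_delete B 0 0) = mat_delete B 0 0"
proof -
  have sym: "B $$ (i,j) = cnj (B $$ (j,i))" if "i < Suc n" "j < Suc n" for i j
    using B that arg_cong[OF herm, of "\<lambda>M. M $$ (i,j)"] by auto
  have "B $$ (0,0) = complex_of_real (Re (B $$ (0,0)))"
    using sym[of 0 0] by (simp add: complex_eq_iff)
  moreover have "B $$ (0,j) = 0" if "0 < j" "j < Suc n" for j
    using sym[of 0 j] col0[of j] that by simp
  ultimately show "B = four_block_mat (diag_real 1 (\<lambda>_. Re (B $$ (0,0)))) (0\<^sub>m 1 n) (0\<^sub>m n 1) (mat_delete B 0 0)"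
    using B col0 by (intro eq_matI) (auto simp: diag_real_def mat_delete_def)
  show "adj (mat_delete B 0 0) = mat_delete B 0 0"
  proof (rule eq_matI)
    fix i j assume "i < dim_row (mat_delete B 0 0)" "j < dim_col (mat_delete B 0 0)"
    then show "adj (mat_delete B 0 0) $$ (i,j) = mat_delete B 0 0 $$ (i,j)"
      using B sym[of "Suc i" "Suc j"] by (simp add: mat_delete_def)
  qed (use B in auto)
qed

lemma hermitian_deflation:
  assumes A: "A \<in> carrier_mat (Suc n) (Suc n)" and herm: "adj A = A"
  shows "\<exists>W \<beta> B. unitary (Suc n) W \<and> B \<in> carrier_mat n n \<and> adj B = B \<and>
    A = W * four_block_mat (diag_real 1 (\<lambda>_. \<beta>)) (0\<^sub>m 1 n) (0\<^sub>m n 1) B * adj W"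
proof -
  obtain \<kappa> v where "eigenvector A v \<kappa>"
    using spectrum_non_empty[OF A] unfolding spectrum_def eigenvalue_def by auto
  then have v: "v \<in> carrier_vec (Suc n)" "v \<noteq> 0\<^sub>v (Suc n)" "A *\<^sub>v v = \<kappa> \<cdot>\<^sub>v v"
    using A unfolding eigenvector_def by auto
  obtain W c where W: "unitary (Suc n) W" and W0: "col W 0 = c \<cdot>\<^sub>v v"
    using unitary_with_first_col[OF v(1,2)] by blast
  have Wc: "W \<in> carrier_mat (Suc n) (Suc n)" using W unfolding unitary_def by auto
  define B where "B = adj W * A * W"
  have Bc: "B \<in> carrier_mat (Suc n) (Suc n)" unfolding B_def using A Wc by auto
  have herm_B: "adj B = B"
    unfolding B_def using A Wc herm
    by (simp add: adj_mult[of _ "Suc n" "Suc n" _ "Suc n"]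
        assoc_mult_mat[of _ "Suc n" "Suc n" _ "Suc n" _ "Suc n"] mult_carrier_mat[of _ "Suc n" "Suc n"])
  have col0: "B $$ (i,0) = 0" if "0 < i" "i < Suc n" for i
  proof -
    have "B $$ (i,0) = col B 0 $ i" using Bc that by simp
    then show ?thesis
      using unitary_conj_eigenvector_col[OF A W _ W0 v(1,3)] that unfolding B_def by simp
  qed
  note blocks = hermitian_first_col_zero_block[OF Bc herm_B col0]
  have "mat_delete B 0 0 \<in> carrier_mat n n"
    using mat_delete_carrier[OF Bc] by simp
  have "W * B * adj W = (W * adj W) * A * (W * adj W)"
    unfolding B_def using Wc A
    by (simp add: assoc_mult_mat[of _ "Suc n" "Suc n" _ "Suc n" _ "Suc n"] mult_carrier_mat[of _ "Suc n" "Suc n"])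
  then have "A = W * B * adj W"
    using A unfolding unitary_mult_adj[OF W] by simp
  then have "A = W * four_block_mat (diag_real 1 (\<lambda>_. Re (B $$ (0,0)))) (0\<^sub>m 1 n) (0\<^sub>m n 1)
      (mat_delete B 0 0) * adj W"
    by (simp only: blocks(1)[symmetric])
  with W blocks(2) \<open>mat_delete B 0 0 \<in> carrier_mat n n\<close> show ?thesis
    by (intro exI[of _ W] exI[of _ "Re (B $$ (0,0))"] exI[of _ "mat_delete B 0 0"]) simp
qed

theorem hermitian_unitary_diagonalization:
  assumes "A \<in> carrier_mat n n" "adj A = A"
  shows "\<exists>U \<mu>. unitary n U \<and> A = U * diag_real n \<mu> * adj U"
  using assms
proof (induction n arbitrary: A)
  case 0
  then show ?case
    by (intro exI[of _ "1\<^sub>m 0"] exI[of _ "\<lambda>_. 0"]) (auto simp: unitary_def)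
next
  case (Suc n)
  obtain W \<beta> B where W: "unitary (Suc n) W" and B: "B \<in> carrier_mat n n" "adj B = B"
    and A: "A = W * four_block_mat (diag_real 1 (\<lambda>_. \<beta>)) (0\<^sub>m 1 n) (0\<^sub>m n 1) B * adj W"
    using hermitian_deflation[OF Suc.prems] by blast
  obtain U \<mu> where U: "unitary n U" and B_eq: "B = U * diag_real n \<mu> * adj U"
    using Suc.IH[OF B] by blast
  define V where "V = four_block_mat (1\<^sub>m 1) (0\<^sub>m 1 n) (0\<^sub>m n 1) U"
  define \<nu> where "\<nu> k = (if k = 0 then \<beta> else \<mu> (k - 1))" for k
  have V: "unitary (Suc n) V"
    unfolding V_def using unitary_four_block[OF U, of 1] by simp
  have "diag_real (Suc n) \<nu>
      = four_block_mat (diag_real 1 (\<lambda>_. \<beta>)) (0\<^sub>m 1 n) (0\<^sub>m n 1) (diag_real n \<mu>)"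
    unfolding diag_real_Suc by (intro cong_four_block_mat eq_matI) (auto simp: diag_real_def \<nu>_def)
  then have "V * diag_real (Suc n) \<nu> * adj V
      = four_block_mat (diag_real 1 (\<lambda>_. \<beta>)) (0\<^sub>m 1 n) (0\<^sub>m n 1) B"
    unfolding V_def B_eq using U unfolding unitary_def by (simp add: four_block_unitary_conj)
  then have "A = W * (V * diag_real (Suc n) \<nu> * adj V) * adj W"
    unfolding A by simp
  also have "\<dots> = (W * V) * diag_real (Suc n) \<nu> * adj (W * V)"
    using W V unfolding unitary_def
    by (simp add: adj_mult[of _ "Suc n" "Suc n" _ "Suc n"]
        assoc_mult_mat[of _ "Suc n" "Suc n" _ "Suc n" _ "Suc n"] mult_carrier_mat[of _ "Suc n" "Suc n"])
  finally show ?case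
    using unitary_mult[OF W V] by blast
qed

lemma psd_unitary_diag_nonneg:
  assumes psd: "\<And>v. v \<in> carrier_vec n \<Longrightarrow> 0 \<le> Re (\<Sum>i<n. \<Sum>j<n. cnj (v $ i) * \<rho> $$ (i,j) * v $ j)"
    and \<rho>: "\<rho> \<in> carrier_mat n n" and U: "unitary n U" and \<rho>_eq: "\<rho> = U * diag_real n \<mu> * adj U"
    and k: "k < n"
  shows "0 \<le> \<mu> k"
proof -
  have Uc: "U \<in> carrier_mat n n" using U unfolding unitary_def by auto
  have "complex_of_real (\<mu> k) = (adj U * \<rho> * adj (adj U)) $$ (k,k)"
    using unitary_conj_diag[OF U diag_real_carrier \<rho>_eq] k by (simp add: diag_real_def)
  also have "\<dots> = (\<Sum>i<n. \<Sum>j<n. cnj (col U k $ i) * \<rho> $$ (i,j) * col U k $ j)"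
    using Uc \<rho> k by (subst index_mult_mult_adj[of "adj U" n n \<rho> n "adj U" n]) auto
  finally have "complex_of_real (\<mu> k) = (\<Sum>i<n. \<Sum>j<n. cnj (col U k $ i) * \<rho> $$ (i,j) * col U k $ j)" .
  moreover have "col U k \<in> carrier_vec n"
    using Uc by (simp add: carrier_vecI)
  ultimately show ?thesis
    using psd[of "col U k"] by (metis Re_complex_of_real)
qed

lemma density_has_pure_decomp:
  assumes "density n \<rho>"
  shows "\<exists>p \<psi>. pure_decomp n \<rho> n p \<psi>"
proof -
  have \<rho>: "\<rho> \<in> carrier_mat n n" and herm: "adj \<rho> = \<rho>"
    and psd: "\<And>v. v \<in> carrier_vec n \<Longrightarrow> 0 \<le> Re (\<Sum>i<n. \<Sum>j<n. cnj (v $ i) * \<rho> $$ (i,j) * v $ j)"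
    and tr: "(\<Sum>i<n. \<rho> $$ (i,i)) = 1"
    using assms unfolding density_def by auto
  obtain U \<mu> where U: "unitary n U" and \<rho>_eq: "\<rho> = U * diag_real n \<mu> * adj U"
    using hermitian_unitary_diagonalization[OF \<rho> herm] by blast
  have Uc: "U \<in> carrier_mat n n" using U unfolding unitary_def by auto
  have on: "orthonormal_fam n n (col U)"
    using U unitary_iff_orthonormal_cols[OF Uc] by simp
  have \<rho>_entry: "\<rho> $$ (i,j) = (\<Sum>k<n. complex_of_real (\<mu> k) * col U k $ i * cnj (col U k $ j))"
    if "i < n" "j < n" for i j
    using index_mult_diag_real_adj[OF Uc Uc that, of \<mu>] Uc that \<rho>_eq by (simp add: mult_ac)
  have "0 \<le> \<mu> k" if "k < n" for k
    using psd_unitary_diag_nonneg[OF psd \<rho> U \<rho>_eq that] .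
  moreover have "(\<Sum>k<n. \<mu> k) = 1"
  proof -
    have "complex_of_real (\<Sum>k<n. \<mu> k) = (\<Sum>k<n. complex_of_real (\<mu> k) * (\<Sum>i<n. cnj (col U k $ i) * col U k $ i))"
      using on unfolding orthonormal_fam_def by (simp add: of_real_sum)
    also have "\<dots> = (\<Sum>k<n. \<Sum>i<n. complex_of_real (\<mu> k) * col U k $ i * cnj (col U k $ i))"
      by (simp add: sum_distrib_left mult_ac)
    also have "\<dots> = (\<Sum>i<n. \<rho> $$ (i,i))"
      by (subst sum.swap) (simp add: \<rho>_entry)
    finally show ?thesis
      using tr by (simp only: of_real_eq_1_iff)
  qed
  ultimately have "pure_decomp n \<rho> n \<mu> (col U)"
    unfolding pure_decomp_def using \<rho> \<rho>_entry orthonormal_fam_unit_vec[OF on] by auto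
  then show ?thesis
    by blast
qed

section \<open>Singular value decomposition and Schmidt rank\<close>

lemma gram_diagonal_factorization:
  assumes M: "M \<in> carrier_mat n s"
  shows "\<exists>Z Y \<mu>. Z \<in> carrier_mat n s \<and> unitary s Y \<and> M = Z * adj Y \<and> adj Z * Z = diag_real s \<mu>"
proof -
  have H: "adj M * M \<in> carrier_mat s s" using M by auto
  have "adj (adj M * M) = adj M * M"
    using M by (simp add: adj_mult[of _ s n _ s])
  then obtain Y \<mu> where Y: "unitary s Y" and H_eq: "adj M * M = Y * diag_real s \<mu> * adj Y"
    using hermitian_unitary_diagonalization[OF H] by blast
  have Yc: "Y \<in> carrier_mat s s" using Y unfolding unitary_def by auto
  have "adj (M * Y) * (M * Y) = (adj Y * adj M) * (M * Y)"
    using adj_mult[OF M Yc] by simp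
  also have "\<dots> = adj Y * (adj M * (M * Y))"
    using M Yc by (intro assoc_mult_mat[of _ s s _ n]) auto
  also have "adj M * (M * Y) = (adj M * M) * Y"
    using M Yc by (intro assoc_mult_mat[symmetric, of _ s n _ s]) auto
  also have "adj Y * \<dots> = adj Y * (adj M * M) * Y"
    using M Yc by (intro assoc_mult_mat[symmetric, of _ s s _ s]) auto
  also have "\<dots> = diag_real s \<mu>"
    by (rule unitary_conj_diag[OF Y diag_real_carrier H_eq])
  finally have "adj (M * Y) * (M * Y) = diag_real s \<mu>" .
  moreover have "M = (M * Y) * adj Y"
    using M Yc unitary_mult_adj[OF Y] by (simp add: assoc_mult_mat[of _ n s _ s _ s])
  ultimately show ?thesis
    using M Yc Y by (intro exI[of _ "M * Y"] exI[of _ Y] exI[of _ \<mu>]) auto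
qed

lemma cols_inner_of_gram_diag:
  assumes Z: "Z \<in> carrier_mat n s" and gram: "adj Z * Z = diag_real s \<mu>" and "k < s" "l < s"
  shows "(\<Sum>i<n. cnj (Z $$ (i,k)) * Z $$ (i,l)) = (if k = l then complex_of_real (\<mu> k) else 0)"
  using arg_cong[OF gram, of "\<lambda>A. A $$ (k,l)"] Z assms(3,4)
  by (simp add: diag_real_def index_mult_mat_sum[of "adj Z" s n Z s] del: index_mult_mat)

lemma orthonormal_fam_normalized_cols:
  assumes Z: "Z \<in> carrier_mat n s" and gram: "adj Z * Z = diag_real s \<mu>"
    and h: "inj_on h {..<r}" "\<forall>k<r. h k < s \<and> 0 < \<mu> (h k)"
  shows "orthonormal_fam n r (\<lambda>k. vec n (\<lambda>i. Z $$ (i, h k) / complex_of_real (sqrt (\<mu> (h k)))))"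
  unfolding orthonormal_fam_def
proof (intro conjI allI impI)
  fix k l assume k: "k < r" and l: "l < r"
  have pos: "0 < \<mu> (h k)" "0 < \<mu> (h l)" using h(2) k l by auto
  then have "sqrt (\<mu> (h k)) * sqrt (\<mu> (h k)) = \<mu> (h k)" by simp
  moreover have "h k = h l \<longleftrightarrow> k = l" using inj_onD[OF h(1)] k l by auto
  ultimately show "(\<Sum>i<n. cnj (vec n (\<lambda>i. Z $$ (i, h k) / complex_of_real (sqrt (\<mu> (h k)))) $ i)
      * vec n (\<lambda>i. Z $$ (i, h l) / complex_of_real (sqrt (\<mu> (h l)))) $ i) = (if k = l then 1 else 0)"
    using cols_inner_of_gram_diag[OF Z gram, of "h k" "h l"] h(2) k l pos
    by (cases "k = l") (auto simp: sum_divide_distrib[symmetric] simp flip: of_real_mult)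
qed simp

lemma orthonormal_fam_conj_cols:
  assumes Y: "unitary s Y" and h: "inj_on h {..<r}" "\<forall>k<r. h k < s"
  shows "orthonormal_fam s r (\<lambda>k. vec s (\<lambda>t. cnj (Y $$ (t, h k))))"
  unfolding orthonormal_fam_def
proof (intro conjI allI impI)
  fix k l assume k: "k < r" and l: "l < r"
  have Yc: "Y \<in> carrier_mat s s" using Y unfolding unitary_def by auto
  have orth: "(\<Sum>t<s. cnj (col Y (h k) $ t) * col Y (h l) $ t) = (if h k = h l then 1 else 0)"
    using Y unitary_iff_orthonormal_cols[OF Yc] h(2) k l unfolding orthonormal_fam_def by auto
  have "(\<Sum>t<s. cnj (vec s (\<lambda>t. cnj (Y $$ (t, h k))) $ t) * vec s (\<lambda>t. cnj (Y $$ (t, h l))) $ t)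
      = cnj (\<Sum>t<s. cnj (col Y (h k) $ t) * col Y (h l) $ t)"
    using Yc h(2) k l by (simp add: cnj_sum mult.commute)
  also have "\<dots> = (if k = l then 1 else 0)"
    unfolding orth using inj_onD[OF h(1)] k l by auto
  finally show "(\<Sum>t<s. cnj (vec s (\<lambda>t. cnj (Y $$ (t, h k))) $ t) * vec s (\<lambda>t. cnj (Y $$ (t, h l))) $ t)
      = (if k = l then 1 else 0)" .
qed simp

lemma singular_value_decomposition:
  assumes "M \<in> carrier_mat n s"
  shows "\<exists>r lam a c. r \<le> s \<and> (\<forall>k<r. 0 < lam k) \<and> orthonormal_fam n r a \<and> orthonormal_fam s r c \<and>
    (\<forall>i<n. \<forall>t<s. M $$ (i,t) = (\<Sum>k<r. complex_of_real (lam k) * a k $ i * c k $ t))"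
proof -
  obtain Z Y \<mu> where Zc: "Z \<in> carrier_mat n s" and Y: "unitary s Y" and M_eq: "M = Z * adj Y"
    and gram: "adj Z * Z = diag_real s \<mu>"
    using gram_diagonal_factorization[OF assms] by blast
  have Yc: "Y \<in> carrier_mat s s" using Y unfolding unitary_def by auto
  have \<mu>_norm: "\<mu> k = (\<Sum>i<n. (cmod (Z $$ (i,k)))\<^sup>2)" if "k < s" for k
  proof -
    have "complex_of_real (\<Sum>i<n. (cmod (Z $$ (i,k)))\<^sup>2) = (\<Sum>i<n. cnj (Z $$ (i,k)) * Z $$ (i,k))"
      by (simp only: of_real_sum complex_norm_square mult.commute)
    then show ?thesis
      using cols_inner_of_gram_diag[OF Zc gram that that] by (simp only: if_P refl of_real_eq_iff)
  qed
  define J where "J = {k. k < s \<and> \<mu> k \<noteq> 0}"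
  obtain h where h: "bij_betw h {..<card J} J"
    using ex_bij_betw_nat_finite[of J] unfolding J_def atLeast0LessThan by auto
  have hJ: "\<forall>k<card J. h k < s \<and> 0 < \<mu> (h k)"
    using bij_betw_apply[OF h] \<mu>_norm unfolding J_def by (fastforce simp: less_le sum_nonneg)
  define lam where "lam k = sqrt (\<mu> (h k))" for k
  define a where "a k = vec n (\<lambda>i. Z $$ (i, h k) / complex_of_real (lam k))" for k
  define c where "c k = vec s (\<lambda>t. cnj (Y $$ (t, h k)))" for k
  have "M $$ (i,t) = (\<Sum>k<card J. complex_of_real (lam k) * a k $ i * c k $ t)"
    if i: "i < n" and t: "t < s" for i t
  proof -
    have "M $$ (i,t) = (\<Sum>k<s. Z $$ (i,k) * cnj (Y $$ (t,k)))"
      unfolding M_eq using Zc Yc i t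
      by (simp add: index_mult_mat_sum[of Z n s "adj Y" s] del: index_mult_mat)
    also have "\<dots> = (\<Sum>k\<in>J. Z $$ (i,k) * cnj (Y $$ (t,k)))"
      using \<mu>_norm i by (intro sum.mono_neutral_right) (auto simp: J_def sum_nonneg_eq_0_iff)
    also have "\<dots> = (\<Sum>k<card J. Z $$ (i, h k) * cnj (Y $$ (t, h k)))"
      by (rule sum.reindex_bij_betw[OF h, symmetric])
    also have "\<dots> = (\<Sum>k<card J. complex_of_real (lam k) * a k $ i * c k $ t)"
      using hJ i t by (intro sum.cong) (auto simp: a_def c_def lam_def)
    finally show ?thesis .
  qed
  moreover have "card J \<le> s"
    unfolding J_def by (rule card_mono[of "{..<s}", simplified]) auto
  moreover have "orthonormal_fam n (card J) a" "orthonormal_fam s (card J) c"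
    unfolding a_def c_def lam_def
    using orthonormal_fam_normalized_cols[OF Zc gram] orthonormal_fam_conj_cols[OF Y]
      bij_betw_imp_inj_on[OF h] hJ by auto
  moreover have "\<forall>k<card J. 0 < lam k"
    using hJ unfolding lam_def by simp
  ultimately show ?thesis
    by blast
qed

lemma orthonormal_fam_embed:
  assumes g: "bij_betw g {..<s} B" and B: "B \<subseteq> {..<d}" and c: "orthonormal_fam s r c"
  shows "orthonormal_fam d r (\<lambda>k. vec d (\<lambda>j. if j \<in> B then c k $ inv_into {..<s} g j else 0))"
  unfolding orthonormal_fam_def
proof (intro conjI allI impI)
  fix k l assume "k < r" "l < r"
  have "(\<Sum>j<d. cnj (vec d (\<lambda>j. if j \<in> B then c k $ inv_into {..<s} g j else 0) $ j)
      * vec d (\<lambda>j. if j \<in> B then c l $ inv_into {..<s} g j else 0) $ j)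
    = (\<Sum>j\<in>B. cnj (c k $ inv_into {..<s} g j) * c l $ inv_into {..<s} g j)"
    using B by (simp add: if_distrib if_distribR sum.If_cases Int_absorb1 cong: if_cong)
  also have "\<dots> = (\<Sum>t<s. cnj (c k $ t) * c l $ t)"
    using g by (subst sum.reindex_bij_betw[OF g, symmetric]) (auto simp: bij_betw_def)
  finally show "(\<Sum>j<d. cnj (vec d (\<lambda>j. if j \<in> B then c k $ inv_into {..<s} g j else 0) $ j)
      * vec d (\<lambda>j. if j \<in> B then c l $ inv_into {..<s} g j else 0) $ j) = (if k = l then 1 else 0)"
    using c \<open>k < r\<close> \<open>l < r\<close> unfolding orthonormal_fam_def by simp
qed simp

lemma schmidt_rank_le_card_cols:
  assumes B: "B \<subseteq> {..<d}"
    and zero: "\<And>i j. i < d \<Longrightarrow> j < d \<Longrightarrow> j \<notin> B \<Longrightarrow> v $ (i * d + j) = 0"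
  shows "schmidt_rank d v \<le> card B"
proof -
  have "finite B" using B finite_subset by blast
  then obtain g where g: "bij_betw g {..<card B} B"
    using ex_bij_betw_nat_finite[of B] unfolding atLeast0LessThan by auto
  define g' where "g' = inv_into {..<card B} g"
  have g': "g' j < card B" "g (g' j) = j" if "j \<in> B" for j
    using g that unfolding g'_def bij_betw_def by (metis inv_into_into lessThan_iff, metis f_inv_into_f)
  define M where "M = mat d (card B) (\<lambda>(i,t). v $ (i * d + g t))"
  obtain r lam a c where r: "r \<le> card B" and lam: "\<forall>k<r. 0 < lam k"
    and a: "orthonormal_fam d r a" and c: "orthonormal_fam (card B) r c"
    and dec: "\<forall>i<d. \<forall>t<card B. M $$ (i,t) = (\<Sum>k<r. complex_of_real (lam k) * a k $ i * c k $ t)"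
    using singular_value_decomposition[of M d "card B"] unfolding M_def by auto
  define b where "b k = vec d (\<lambda>j. if j \<in> B then c k $ g' j else 0)" for k
  have "orthonormal_fam d r b"
    unfolding b_def g'_def by (rule orthonormal_fam_embed[OF g B c])
  moreover have "v $ (i * d + j) = (\<Sum>k<r. complex_of_real (lam k) * a k $ i * b k $ j)"
    if "i < d" "j < d" for i j
  proof (cases "j \<in> B")
    case True
    then have "v $ (i * d + j) = M $$ (i, g' j)"
      unfolding M_def using that g' by simp
    then show ?thesis
      using dec g' that True by (simp add: b_def)
  qed (simp add: zero that b_def)
  ultimately have "schmidt_decomp d v r lam a b"
    unfolding schmidt_decomp_def using lam a by blast
  then have "schmidt_rank d v \<le> r"
    unfolding schmidt_rank_def by (blast intro: Least_le)
  with r show ?thesis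
    by simp
qed

lemma schmidt_rank_le_coh_rank: "schmidt_rank d v \<le> coh_rank (d * d) v"
proof -
  define S where "S = {x. x < d * d \<and> v $ x \<noteq> 0}"
  have "schmidt_rank d v \<le> card ((\<lambda>x. x mod d) ` S)"
  proof (rule schmidt_rank_le_card_cols)
    show "(\<lambda>x. x mod d) ` S \<subseteq> {..<d}"
    proof
      fix y assume "y \<in> (\<lambda>x. x mod d) ` S"
      then obtain x where "x < d * d" "y = x mod d" unfolding S_def by auto
      then show "y \<in> {..<d}" by (cases "d = 0") auto
    qed
    fix i j assume i: "i < d" and j: "j < d" and "j \<notin> (\<lambda>x. x mod d) ` S"
    moreover have "(i * d + j) mod d = j"
      using j by simp
    ultimately have "i * d + j \<notin> S"
      by (metis image_eqI)
    then show "v $ (i * d + j) = 0"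
      using index_pair_less[OF i j] unfolding S_def by simp
  qed
  also have "\<dots> \<le> card S"
    unfolding S_def by (rule card_image_le) simp
  finally show ?thesis
    unfolding coh_rank_def S_def .
qed

section \<open>Incoherent Kraus operators\<close>

lemma incoherent_kraus_col_unique:
  assumes K: "K \<in> carrier_mat n n"
    and inc: "\<forall>\<delta> \<in> carrier_mat n n. diagonal_mat \<delta> \<longrightarrow> diagonal_mat (K * \<delta> * adj K)"
    and a: "a < n" and x: "x < n" "x' < n" and nz: "K $$ (x,a) \<noteq> 0" "K $$ (x',a) \<noteq> 0"
  shows "x = x'"
proof (rule ccontr)
  assume "x \<noteq> x'"
  define \<delta> where "\<delta> = diag_real n (\<lambda>i. if i = a then 1 else 0)"
  define P where "P = K * \<delta> * adj K"
  have "diagonal_mat \<delta>"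
    unfolding \<delta>_def diag_real_def diagonal_mat_def by auto
  then have "diagonal_mat P"
    using inc unfolding P_def \<delta>_def by simp
  moreover have "dim_row P = n" "dim_col P = n"
    using K unfolding P_def \<delta>_def by auto
  ultimately have "P $$ (x,x') = 0"
    using x \<open>x \<noteq> x'\<close> unfolding diagonal_mat_def by simp
  moreover have "P $$ (x,x') = K $$ (x,a) * cnj (K $$ (x',a))"
    unfolding P_def \<delta>_def index_mult_diag_real_adj[OF K K x] using a
    by (simp add: if_distrib if_distribR sum.delta cong: if_cong)
  ultimately show False
    using nz by simp
qed

lemma coh_rank_incoherent_kraus_le:
  assumes K: "K \<in> carrier_mat n n"
    and inc: "\<forall>\<delta> \<in> carrier_mat n n. diagonal_mat \<delta> \<longrightarrow> diagonal_mat (K * \<delta> * adj K)"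
    and v: "v \<in> carrier_vec n"
  shows "coh_rank n (K *\<^sub>v v) \<le> coh_rank n v"
proof -
  define S where "S = {a. a < n \<and> v $ a \<noteq> 0}"
  define f where "f a = (SOME x. x < n \<and> K $$ (x,a) \<noteq> 0)" for a
  have "{x. x < n \<and> (K *\<^sub>v v) $ x \<noteq> 0} \<subseteq> f ` S"
  proof
    fix x assume "x \<in> {x. x < n \<and> (K *\<^sub>v v) $ x \<noteq> 0}"
    then have x: "x < n" and Kv_x: "(\<Sum>a<n. K $$ (x,a) * v $ a) \<noteq> 0"
      using index_mult_mat_vec_sum[OF K v] by auto
    from Kv_x obtain a where a: "a < n" "K $$ (x,a) * v $ a \<noteq> 0"
      by (rule sum.not_neutral_contains_not_neutral) simp
    then have a: "a < n" "K $$ (x,a) \<noteq> 0" "v $ a \<noteq> 0"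
      by auto
    with x have "\<exists>y. y < n \<and> K $$ (y,a) \<noteq> 0"
      by blast
    then have fa: "f a < n \<and> K $$ (f a, a) \<noteq> 0"
      unfolding f_def by (rule someI_ex)
    then have "x = f a"
      using incoherent_kraus_col_unique[OF K inc a(1) x, of "f a"] a by simp
    then show "x \<in> f ` S"
      using a unfolding S_def by blast
  qed
  then have "coh_rank n (K *\<^sub>v v) \<le> card (f ` S)"
    unfolding coh_rank_def S_def by (intro card_mono) auto
  also have "\<dots> \<le> coh_rank n v"
    unfolding coh_rank_def S_def by (rule card_image_le) simp
  finally show ?thesis .
qed

lemma cscalar_prod_mult_mat_vec:
  assumes A: "A \<in> carrier_mat r n" and v: "v \<in> carrier_vec n"
  shows "(A *\<^sub>v v) \<bullet>c (A *\<^sub>v v) = (\<Sum>b<n. \<Sum>a<n. v $ a * cnj (v $ b) * (adj A * A) $$ (b,a))"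
proof -
  have "(A *\<^sub>v v) \<bullet>c (A *\<^sub>v v) = (\<Sum>x<r. \<Sum>b<n. \<Sum>a<n. v $ a * cnj (v $ b) * (cnj (A $$ (x,b)) * A $$ (x,a)))"
    using A v by (simp add: scalar_prod_def atLeast0LessThan index_mult_mat_vec_sum cnj_sum
        sum_distrib_left sum_distrib_right mult_ac)
  also have "\<dots> = (\<Sum>b<n. \<Sum>a<n. \<Sum>x<r. v $ a * cnj (v $ b) * (cnj (A $$ (x,b)) * A $$ (x,a)))"
    by (subst sum.swap) (rule sum.cong[OF refl], rule sum.swap)
  also have "\<dots> = (\<Sum>b<n. \<Sum>a<n. v $ a * cnj (v $ b) * (adj A * A) $$ (b,a))"
    using A by (intro sum.cong refl)
      (simp add: index_mult_mat_sum[of "adj A" n r A n] sum_distrib_left del: index_mult_mat)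
  finally show ?thesis .
qed

lemma kraus_sum_norm_sq:
  assumes K: "\<forall>l<N. K l \<in> carrier_mat n n"
    and complete: "\<forall>i<n. \<forall>j<n. (\<Sum>l<N. (adj (K l) * K l) $$ (i,j)) = (if i = j then 1 else 0)"
    and v: "v \<in> carrier_vec n"
  shows "(\<Sum>l<N. vec_norm_sq (K l *\<^sub>v v)) = vec_norm_sq v"
proof -
  have "complex_of_real (\<Sum>l<N. vec_norm_sq (K l *\<^sub>v v))
      = (\<Sum>l<N. \<Sum>b<n. \<Sum>a<n. v $ a * cnj (v $ b) * (adj (K l) * K l) $$ (b,a))"
    unfolding of_real_sum using K v
    by (intro sum.cong refl) (simp add: of_real_vec_norm_sq cscalar_prod_mult_mat_vec[of _ n n])
  also have "\<dots> = (\<Sum>b<n. \<Sum>a<n. \<Sum>l<N. v $ a * cnj (v $ b) * (adj (K l) * K l) $$ (b,a))"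
    by (subst sum.swap) (rule sum.cong[OF refl], rule sum.swap)
  also have "\<dots> = (\<Sum>b<n. \<Sum>a<n. v $ a * cnj (v $ b) * (if b = a then 1 else 0))"
    using complete by (intro sum.cong refl) (simp add: sum_distrib_left[symmetric])
  also have "\<dots> = (\<Sum>b<n. v $ b * cnj (v $ b))"
    by (simp add: if_distrib if_distribR sum.delta sum.delta' cong: if_cong)
  also have "\<dots> = complex_of_real (vec_norm_sq v)"
    using v by (simp add: of_real_vec_norm_sq scalar_prod_def atLeast0LessThan)
  finally show ?thesis
    by (simp only: of_real_eq_iff)
qed

lemma sum_kraus_weights:
  assumes K: "\<forall>l<N. K l \<in> carrier_mat n n"
    and complete: "\<forall>i<n. \<forall>j<n. (\<Sum>l<N. (adj (K l) * K l) $$ (i,j)) = (if i = j then 1 else 0)"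
    and \<psi>: "\<forall>k<m. \<psi> k \<in> carrier_vec n \<and> vec_norm_sq (\<psi> k) = 1"
  shows "(\<Sum>k<m. \<Sum>l<N. p k * vec_norm_sq (K l *\<^sub>v \<psi> k) * F k) = (\<Sum>k<m. p k * F k)"
proof -
  have "(\<Sum>k<m. \<Sum>l<N. p k * vec_norm_sq (K l *\<^sub>v \<psi> k) * F k)
      = (\<Sum>k<m. p k * F k * (\<Sum>l<N. vec_norm_sq (K l *\<^sub>v \<psi> k)))"
    by (simp add: sum_distrib_left mult_ac)
  also have "\<dots> = (\<Sum>k<m. p k * F k)"
    using K complete \<psi> by (intro sum.cong refl) (simp add: kraus_sum_norm_sq)
  finally show ?thesis .
qed

lemma weighted_log_coh_rank_kraus_le:
  assumes K: "K \<in> carrier_mat n n"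
    and inc: "\<forall>\<delta> \<in> carrier_mat n n. diagonal_mat \<delta> \<longrightarrow> diagonal_mat (K * \<delta> * adj K)"
    and v: "v \<in> carrier_vec n" and "0 \<le> p"
  shows "p * vec_norm_sq (K *\<^sub>v v) * log 2 (real (coh_rank n (normalize_vec n (K *\<^sub>v v))))
    \<le> p * vec_norm_sq (K *\<^sub>v v) * log 2 (real (coh_rank n v))"
proof (cases "vec_norm_sq (K *\<^sub>v v) = 0")
  case False
  then have "coh_rank n (normalize_vec n (K *\<^sub>v v)) \<le> coh_rank n v"
    using K v coh_rank_normalize_vec coh_rank_incoherent_kraus_le[OF K inc v] by simp
  then show ?thesis
    using \<open>0 \<le> p\<close> vec_norm_sq_nonneg
    by (intro mult_left_mono log2_of_nat_mono) auto
qed simp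

section \<open>Pure-state decompositions\<close>

lemma index_mult_mixture_adj:
  assumes K: "K \<in> carrier_mat r n" and \<rho>: "\<rho> \<in> carrier_mat n n"
    and \<psi>: "\<forall>k<m. \<psi> k \<in> carrier_vec n"
    and \<rho>_eq: "\<forall>a<n. \<forall>b<n. \<rho> $$ (a,b) = (\<Sum>k<m. complex_of_real (p k) * \<psi> k $ a * cnj (\<psi> k $ b))"
    and i: "i < r" and j: "j < r"
  shows "(K * \<rho> * adj K) $$ (i,j)
    = (\<Sum>k<m. complex_of_real (p k) * (K *\<^sub>v \<psi> k) $ i * cnj ((K *\<^sub>v \<psi> k) $ j))"
proof -
  have "(K * \<rho> * adj K) $$ (i,j)
      = (\<Sum>a<n. \<Sum>b<n. \<Sum>k<m. complex_of_real (p k) * (K $$ (i,a) * \<psi> k $ a) * cnj (K $$ (j,b) * \<psi> k $ b))"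
    unfolding index_mult_mult_adj[OF K \<rho> K i j] using \<rho>_eq
    by (intro sum.cong refl) (simp add: sum_distrib_left mult_ac)
  also have "\<dots> = (\<Sum>a<n. \<Sum>k<m. \<Sum>b<n. complex_of_real (p k) * (K $$ (i,a) * \<psi> k $ a) * cnj (K $$ (j,b) * \<psi> k $ b))"
    by (intro sum.cong refl sum.swap)
  also have "\<dots> = (\<Sum>k<m. \<Sum>a<n. \<Sum>b<n. complex_of_real (p k) * (K $$ (i,a) * \<psi> k $ a) * cnj (K $$ (j,b) * \<psi> k $ b))"
    by (rule sum.swap)
  also have "\<dots> = (\<Sum>k<m. complex_of_real (p k) * (K *\<^sub>v \<psi> k) $ i * cnj ((K *\<^sub>v \<psi> k) $ j))"
    using K \<psi> i j
    by (intro sum.cong refl)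
      (simp add: index_mult_mat_vec_sum cnj_sum sum_distrib_left sum_distrib_right mult_ac del: index_mult_mat_vec)
  finally show ?thesis .
qed

lemma index_apply_kraus_pure_decomp:
  assumes K: "\<forall>l<N. K l \<in> carrier_mat n n" and \<rho>: "pure_decomp n \<rho> m p \<psi>" and ij: "i < n" "j < n"
  shows "apply_kraus n N K \<rho> $$ (i,j)
    = (\<Sum>k<m. \<Sum>l<N. complex_of_real (p k) * (K l *\<^sub>v \<psi> k) $ i * cnj ((K l *\<^sub>v \<psi> k) $ j))"
proof -
  have "apply_kraus n N K \<rho> $$ (i,j) = (\<Sum>l<N. (K l * \<rho> * adj (K l)) $$ (i,j))"
    unfolding apply_kraus_def using ij by simp
  also have "\<dots> = (\<Sum>l<N. \<Sum>k<m. complex_of_real (p k) * (K l *\<^sub>v \<psi> k) $ i * cnj ((K l *\<^sub>v \<psi> k) $ j))"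
    using K \<rho> ij unfolding pure_decomp_def unit_vec_def
    by (intro sum.cong refl index_mult_mixture_adj[of _ n n]) auto
  also have "\<dots> = (\<Sum>k<m. \<Sum>l<N. complex_of_real (p k) * (K l *\<^sub>v \<psi> k) $ i * cnj ((K l *\<^sub>v \<psi> k) $ j))"
    by (rule sum.swap)
  finally show ?thesis .
qed

lemma pure_decomp_normalize:
  assumes n: "0 < n" and \<sigma>: "\<sigma> \<in> carrier_mat n n"
    and w: "\<forall>t<M. w t \<in> carrier_vec n" and c: "\<forall>t<M. 0 \<le> c t"
    and total: "(\<Sum>t<M. c t * vec_norm_sq (w t)) = 1"
    and \<sigma>_eq: "\<forall>i<n. \<forall>j<n. \<sigma> $$ (i,j) = (\<Sum>t<M. complex_of_real (c t) * w t $ i * cnj (w t $ j))"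
  shows "pure_decomp n \<sigma> M (\<lambda>t. c t * vec_norm_sq (w t)) (\<lambda>t. normalize_vec n (w t))"
  unfolding pure_decomp_def
proof (intro conjI allI impI)
  fix i j assume "i < n" "j < n"
  then show "\<sigma> $$ (i,j) = (\<Sum>t<M. complex_of_real (c t * vec_norm_sq (w t))
      * normalize_vec n (w t) $ i * cnj (normalize_vec n (w t) $ j))"
    using \<sigma>_eq w norm_sq_mult_normalize_vec
    by (auto simp: mult.assoc intro!: sum.cong)
qed (use assms vec_norm_sq_nonneg unit_vec_normalize_vec in auto)

lemma pure_decomp_kraus_family:
  assumes n: "0 < n" and K: "\<forall>l<N. K l \<in> carrier_mat n n"
    and complete: "\<forall>i<n. \<forall>j<n. (\<Sum>l<N. (adj (K l) * K l) $$ (i,j)) = (if i = j then 1 else 0)"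
    and \<rho>: "pure_decomp n \<rho> m p \<psi>"
  shows "pure_decomp n (apply_kraus n N K \<rho>) (m * N)
    (\<lambda>t. p (t div N) * vec_norm_sq (K (t mod N) *\<^sub>v \<psi> (t div N)))
    (\<lambda>t. normalize_vec n (K (t mod N) *\<^sub>v \<psi> (t div N)))"
proof -
  have p: "\<forall>k<m. 0 \<le> p k" "(\<Sum>k<m. p k) = 1"
    and \<psi>: "\<forall>k<m. \<psi> k \<in> carrier_vec n \<and> vec_norm_sq (\<psi> k) = 1"
    using \<rho> unfolding pure_decomp_def unit_vec_iff_norm_sq by auto
  have "(\<Sum>t<m * N. p (t div N) * vec_norm_sq (K (t mod N) *\<^sub>v \<psi> (t div N)))
      = (\<Sum>k<m. \<Sum>l<N. p k * vec_norm_sq (K l *\<^sub>v \<psi> k) * 1)"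
    by (simp add: sum_lessThan_mult_div_mod[of "\<lambda>k l. p k * vec_norm_sq (K l *\<^sub>v \<psi> k)"])
  then have "(\<Sum>t<m * N. p (t div N) * vec_norm_sq (K (t mod N) *\<^sub>v \<psi> (t div N))) = 1"
    using p sum_kraus_weights[OF K complete \<psi>, of p "\<lambda>_. 1"] by simp
  moreover have "apply_kraus n N K \<rho> $$ (i,j) = (\<Sum>t<m * N. complex_of_real (p (t div N))
      * (K (t mod N) *\<^sub>v \<psi> (t div N)) $ i * cnj ((K (t mod N) *\<^sub>v \<psi> (t div N)) $ j))"
    if "i < n" "j < n" for i j
    unfolding index_apply_kraus_pure_decomp[OF K \<rho> that]
    by (rule sum_lessThan_mult_div_mod[of "\<lambda>k l. complex_of_real (p k) * (K l *\<^sub>v \<psi> k) $ i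
        * cnj ((K l *\<^sub>v \<psi> k) $ j)", symmetric])
  moreover have "K (t mod N) *\<^sub>v \<psi> (t div N) \<in> carrier_vec n" "0 \<le> p (t div N)" if "t < m * N" for t
  proof -
    have "0 < N"
      using that by (cases "N = 0") auto
    then have "t div N < m" "t mod N < N"
      using that by (auto simp: less_mult_imp_div_less)
    then show "K (t mod N) *\<^sub>v \<psi> (t div N) \<in> carrier_vec n" "0 \<le> p (t div N)"
      using K \<psi> p by auto
  qed
  ultimately show ?thesis
    by (intro pure_decomp_normalize[OF n]) (auto simp: apply_kraus_def)
qed

lemma pure_decomp_apply_kraus:
  assumes n: "0 < n" and inc: "incoherent_op n N K" and \<rho>: "pure_decomp n \<rho> m p \<psi>"
  shows "\<exists>M q \<phi>. pure_decomp n (apply_kraus n N K \<rho>) M q \<phi> \<and>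
    (\<Sum>t<M. q t * log 2 (real (coh_rank n (\<phi> t)))) \<le> (\<Sum>k<m. p k * log 2 (real (coh_rank n (\<psi> k))))"
proof -
  have K: "\<forall>l<N. K l \<in> carrier_mat n n"
    and complete: "\<forall>i<n. \<forall>j<n. (\<Sum>l<N. (adj (K l) * K l) $$ (i,j)) = (if i = j then 1 else 0)"
    and diag: "\<forall>l<N. \<forall>\<delta> \<in> carrier_mat n n. diagonal_mat \<delta> \<longrightarrow> diagonal_mat (K l * \<delta> * adj (K l))"
    using inc unfolding incoherent_op_def by auto
  have p: "\<forall>k<m. 0 \<le> p k"
    and \<psi>: "\<forall>k<m. \<psi> k \<in> carrier_vec n \<and> vec_norm_sq (\<psi> k) = 1"
    using \<rho> unfolding pure_decomp_def unit_vec_iff_norm_sq by auto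
  have "(\<Sum>t<m * N. p (t div N) * vec_norm_sq (K (t mod N) *\<^sub>v \<psi> (t div N))
      * log 2 (real (coh_rank n (normalize_vec n (K (t mod N) *\<^sub>v \<psi> (t div N))))))
    = (\<Sum>k<m. \<Sum>l<N. p k * vec_norm_sq (K l *\<^sub>v \<psi> k)
      * log 2 (real (coh_rank n (normalize_vec n (K l *\<^sub>v \<psi> k)))))"
    by (rule sum_lessThan_mult_div_mod[of "\<lambda>k l. p k * vec_norm_sq (K l *\<^sub>v \<psi> k)
        * log 2 (real (coh_rank n (normalize_vec n (K l *\<^sub>v \<psi> k))))"])
  also have "\<dots> \<le> (\<Sum>k<m. \<Sum>l<N. p k * vec_norm_sq (K l *\<^sub>v \<psi> k) * log 2 (real (coh_rank n (\<psi> k))))"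
    using K diag \<psi> p by (intro sum_mono weighted_log_coh_rank_kraus_le) auto
  also have "\<dots> = (\<Sum>k<m. p k * log 2 (real (coh_rank n (\<psi> k))))"
    by (rule sum_kraus_weights[OF K complete \<psi>])
  finally show ?thesis
    using pure_decomp_kraus_family[OF n K complete \<rho>] by blast
qed

definition tensor_ket0_vec :: "nat \<Rightarrow> complex vec \<Rightarrow> complex vec" where
  "tensor_ket0_vec d v = vec (d * d) (\<lambda>a. if a mod d = 0 then v $ (a div d) else 0)"

lemma coh_rank_tensor_ket0_vec:
  assumes "0 < d"
  shows "coh_rank (d * d) (tensor_ket0_vec d v) = coh_rank d v"
proof -
  have "{a. a < d * d \<and> tensor_ket0_vec d v $ a \<noteq> 0} = (\<lambda>i. i * d) ` {i. i < d \<and> v $ i \<noteq> 0}"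
  proof (rule equalityI; rule subsetI)
    fix a assume "a \<in> {a. a < d * d \<and> tensor_ket0_vec d v $ a \<noteq> 0}"
    then have a: "a < d * d" "a mod d = 0" "v $ (a div d) \<noteq> 0"
      by (auto simp: tensor_ket0_vec_def split: if_splits)
    then have "a = a div d * d" "a div d < d"
      by (auto simp: less_mult_imp_div_less elim!: dvdE)
    then show "a \<in> (\<lambda>i. i * d) ` {i. i < d \<and> v $ i \<noteq> 0}"
      using a by blast
  next
    fix a assume "a \<in> (\<lambda>i. i * d) ` {i. i < d \<and> v $ i \<noteq> 0}"
    then obtain i where "i < d" "v $ i \<noteq> 0" "a = i * d"
      by blast
    then show "a \<in> {a. a < d * d \<and> tensor_ket0_vec d v $ a \<noteq> 0}"
      using index_pair_less[of i d 0] assms by (simp add: tensor_ket0_vec_def)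
  qed
  moreover have "inj_on (\<lambda>i. i * d) {i. i < d \<and> v $ i \<noteq> 0}"
    using assms by (auto intro: inj_onI)
  ultimately show ?thesis
    unfolding coh_rank_def by (simp add: card_image)
qed

lemma pure_decomp_tensor_ket0:
  assumes d: "0 < d" and \<rho>: "pure_decomp d \<rho> m p \<psi>"
  shows "pure_decomp (d * d) (tensor_ket0 d \<rho>) m p (\<lambda>k. tensor_ket0_vec d (\<psi> k))"
proof -
  have \<rho>_eq: "\<forall>i<d. \<forall>j<d. \<rho> $$ (i,j) = (\<Sum>k<m. complex_of_real (p k) * \<psi> k $ i * cnj (\<psi> k $ j))"
    using \<rho> unfolding pure_decomp_def by blast
  have "vec_norm_sq (tensor_ket0_vec d v) = vec_norm_sq v" if "v \<in> carrier_vec d" for v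
    using that sum_if_mod_eq_0[OF d, of "\<lambda>i. (cmod (v $ i))\<^sup>2"]
    by (simp add: vec_norm_sq_def tensor_ket0_vec_def if_distrib[of "\<lambda>z. (cmod z)\<^sup>2"] cong: if_cong)
  moreover have "tensor_ket0 d \<rho> $$ (a,b)
      = (\<Sum>k<m. complex_of_real (p k) * tensor_ket0_vec d (\<psi> k) $ a * cnj (tensor_ket0_vec d (\<psi> k) $ b))"
    if ab: "a < d * d" "b < d * d" for a b
  proof (cases "a mod d = 0 \<and> b mod d = 0")
    case True
    moreover have "a div d < d" "b div d < d"
      using ab by (auto simp: less_mult_imp_div_less)
    ultimately show ?thesis
      using ab \<rho>_eq by (simp add: tensor_ket0_def tensor_ket0_vec_def)
  next
    case False
    then show ?thesis
      using ab by (auto simp: tensor_ket0_def tensor_ket0_vec_def)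
  qed
  ultimately show ?thesis
    using \<rho> unfolding pure_decomp_def unit_vec_iff_norm_sq
    by (simp add: tensor_ket0_def tensor_ket0_vec_def)
qed

lemma Inf_pure_decomp_mono:
  fixes f g :: "complex vec \<Rightarrow> nat"
  assumes ex: "pure_decomp n \<rho> m0 p0 \<psi>0"
    and transfer: "\<And>m p \<psi>. pure_decomp n \<rho> m p \<psi> \<Longrightarrow> \<exists>m' q \<phi>. pure_decomp n' \<sigma> m' q \<phi> \<and>
        (\<Sum>k<m'. q k * log 2 (real (g (\<phi> k)))) \<le> (\<Sum>k<m. p k * log 2 (real (f (\<psi> k))))"
  shows "Inf {(\<Sum>k<m. p k * log 2 (real (g (\<psi> k)))) | m p \<psi>. pure_decomp n' \<sigma> m p \<psi>}
    \<le> Inf {(\<Sum>k<m. p k * log 2 (real (f (\<psi> k)))) | m p \<psi>. pure_decomp n \<rho> m p \<psi>}"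
proof (rule cInf_mono)
  show "{(\<Sum>k<m. p k * log 2 (real (f (\<psi> k)))) | m p \<psi>. pure_decomp n \<rho> m p \<psi>} \<noteq> {}"
    using ex by blast
  show "bdd_below {(\<Sum>k<m. p k * log 2 (real (g (\<psi> k)))) | m p \<psi>. pure_decomp n' \<sigma> m p \<psi>}"
    by (rule bdd_belowI[of _ 0])
      (auto simp: pure_decomp_def intro!: sum_nonneg mult_nonneg_nonneg log2_of_nat_nonneg)
  fix x assume "x \<in> {(\<Sum>k<m. p k * log 2 (real (f (\<psi> k)))) | m p \<psi>. pure_decomp n \<rho> m p \<psi>}"
  then show "\<exists>y \<in> {(\<Sum>k<m. p k * log 2 (real (g (\<psi> k)))) | m p \<psi>. pure_decomp n' \<sigma> m p \<psi>}. y \<le> x"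
    using transfer by blast
qed

lemma L_E_le_L_C:
  assumes "pure_decomp (d * d) \<sigma> m p \<psi>"
  shows "L_E d \<sigma> \<le> L_C (d * d) \<sigma>"
  unfolding L_E_def L_C_def
proof (rule Inf_pure_decomp_mono[OF assms])
  fix m p \<psi> assume pd: "pure_decomp (d * d) \<sigma> m p \<psi>"
  then have "(\<Sum>k<m. p k * log 2 (real (schmidt_rank d (\<psi> k))))
      \<le> (\<Sum>k<m. p k * log 2 (real (coh_rank (d * d) (\<psi> k))))"
    unfolding pure_decomp_def
    by (auto intro!: sum_mono mult_left_mono log2_of_nat_mono schmidt_rank_le_coh_rank)
  with pd show "\<exists>m' q \<phi>. pure_decomp (d * d) \<sigma> m' q \<phi> \<and>
      (\<Sum>k<m'. q k * log 2 (real (schmidt_rank d (\<phi> k)))) \<le> (\<Sum>k<m. p k * log 2 (real (coh_rank (d * d) (\<psi> k))))"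
    by blast
qed

lemma L_C_apply_kraus_le:
  assumes "0 < n" "incoherent_op n N K" "pure_decomp n \<rho> m p \<psi>"
  shows "L_C n (apply_kraus n N K \<rho>) \<le> L_C n \<rho>"
  unfolding L_C_def using assms by (intro Inf_pure_decomp_mono pure_decomp_apply_kraus)

lemma L_C_tensor_ket0_le:
  assumes d: "0 < d" and \<rho>: "pure_decomp d \<rho> m p \<psi>"
  shows "L_C (d * d) (tensor_ket0 d \<rho>) \<le> L_C d \<rho>"
  unfolding L_C_def
proof (rule Inf_pure_decomp_mono[OF \<rho>])
  fix m p \<psi> assume "pure_decomp d \<rho> m p \<psi>"
  then show "\<exists>m' q \<phi>. pure_decomp (d * d) (tensor_ket0 d \<rho>) m' q \<phi> \<and>
      (\<Sum>k<m'. q k * log 2 (real (coh_rank (d * d) (\<phi> k)))) \<le> (\<Sum>k<m. p k * log 2 (real (coh_rank d (\<psi> k))))"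
    using pure_decomp_tensor_ket0[OF d] coh_rank_tensor_ket0_vec[OF d] by fastforce
qed

theorem proposition5:
  fixes d N :: nat and \<rho> :: "complex mat" and K :: "nat \<Rightarrow> complex mat"
  assumes "0 < d"
    and "density d \<rho>"
    and "incoherent_op (d * d) N K"
  shows "L_C d \<rho> \<ge> L_E d (apply_kraus (d * d) N K (tensor_ket0 d \<rho>))"
proof -
  define \<sigma> where "\<sigma> = apply_kraus (d * d) N K (tensor_ket0 d \<rho>)"
  have dd: "0 < d * d" using assms(1) by simp
  obtain p \<psi> where \<rho>: "pure_decomp d \<rho> d p \<psi>"
    using density_has_pure_decomp[OF assms(2)] by blast
  note \<rho>0 = pure_decomp_tensor_ket0[OF assms(1) \<rho>]
  obtain M q \<phi> where "pure_decomp (d * d) \<sigma> M q \<phi>"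
    using pure_decomp_apply_kraus[OF dd assms(3) \<rho>0] unfolding \<sigma>_def by blast
  then have "L_E d \<sigma> \<le> L_C (d * d) \<sigma>"
    by (rule L_E_le_L_C)
  also have "\<dots> \<le> L_C (d * d) (tensor_ket0 d \<rho>)"
    unfolding \<sigma>_def using dd assms(3) \<rho>0 by (rule L_C_apply_kraus_le)
  also have "\<dots> \<le> L_C d \<rho>"
    using assms(1) \<rho> by (rule L_C_tensor_ket0_le)
  finally show ?thesis
    unfolding \<sigma>_def .
qed

end
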